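(* (i) For all integers $m\ge1$, $n\ge 2$ and all real $\alpha\notin\pi\mathbb{Z}$, $$S(m,n,\alpha)=\operatorname{Tr}\big((\cot\alpha\, J_n+B_n)^m\big).$$ (ii) For each $m\ge 1$ there are polynomials $p_{m,m-2k}(x)$, $0\le k\le\lfloor m/2\rfloor$, with rational coefficients, integer-valued and independent of $n$ and $\alpha$, such that for all $n\ge2$ and all real $\alpha\notin\pi\mathbb{Z}$ $$S(m,n,\alpha)=\sum_{0\le k\le\lfloor m/2\rfloor}p_{m,m-2k}(n)\cot^{m-2k}\alpha .$$ Moreover, for every integer $n\ge 2$ the coefficients $p_{m,m-2k}(n)$ are positive integers.
   Context: For integers $m\ge1$, $n\ge2$ and real $\alpha\notin\pi\mathbb{Z}$, $S(m,n,\alpha)=\sum_{k=0}^{n-1}\cot^m\frac{\alpha+k\pi}{n}$. $J_n$ is the $n\times n$ all-ones matrix, and $B_n=i\,M$ where $M$ is the $n\times n$ matrix with zero diagonal, entries $1$ above the diagonal and $-1$ below the diagonal. *)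

theory Defs
  imports Complex_Main "HOL-Computational_Algebra.Polynomial" "Jordan_Normal_Form.Matrix"
begin

definition S :: "nat \<Rightarrow> nat \<Rightarrow> real \<Rightarrow> real" where
  "S m n \<alpha> = (\<Sum>k<n. cot ((\<alpha> + real k * pi) / real n) ^ m)"

definition J_mat :: "nat \<Rightarrow> complex mat" where
  "J_mat n = mat n n (\<lambda>(i,j). 1)"

definition B_mat :: "nat \<Rightarrow> complex mat" where
  "B_mat n = mat n n (\<lambda>(i,j). if i < j then \<i> else if j < i then - \<i> else 0)"

definition mat_trace :: "'a::comm_ring_1 mat \<Rightarrow> 'a" where
  "mat_trace A = (\<Sum>i<dim_row A. A $$ (i,i))"

end

theory Submission
  imports Defs
begin

text \<open>
  Put theta_k = (alpha + k pi)/n and w_k = e^(-2 i theta_k). The vector (w_k^i)_i is an eigenvector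
  of cot alpha J_n + B_n with eigenvalue cot theta_k: summing geometric series reduces this to
  cot t (1 - e^(-2it)) = i (1 + e^(-2it)) for t = alpha and t = theta_k, because w_k^n = e^(-2 i alpha).
  These eigenvectors form a discrete Fourier basis, so the trace of the m-th power is S(m,n,alpha).

  Differentiating in alpha expresses S(m+2,n,alpha) through S(m,n,alpha) and the derivative of
  S(m+1,n,alpha), so S(m,n,alpha) is a polynomial in cot alpha of the parity of m whose coefficients
  are rational polynomials in n. For fixed n the same coefficients belong to c \<mapsto> tr (c J_n + B_n)^m.
  As c J_n = c u u^T with u the all-ones vector, expanding the power writes them as sums of products
  of the moments u^T B_n^g u and the traces tr B_n^g. These are integers, since B_n has Gaussian
  integer entries, and by the first part at alpha = pi/2 they equal (S(g) + S(g+2))/n and S(g) at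
  pi/2, which vanish for odd g and are positive for even g. Finally, a rational polynomial taking
  integer values at all large integers takes integer values at all integers, by finite differences.
\<close>

section \<open>Integer-valued polynomials\<close>

lemma Ints_of_rat_iff: "(of_rat r :: 'a::field_char_0) \<in> \<int> \<longleftrightarrow> r \<in> \<int>"
proof
  assume "(of_rat r :: 'a) \<in> \<int>"
  then obtain z where "(of_rat r :: 'a) = of_rat (of_int z)"
    by (auto elim: Ints_cases)
  then have "r = of_int z"
    by (simp only: of_rat_eq_iff)
  then show "r \<in> \<int>"
    by simp
qed (auto elim: Ints_cases)

lemma degree_forward_difference_less:
  fixes p :: "'a::idom poly"
  assumes "degree p > 0"
  shows "degree (p \<circ>\<^sub>p [:1, 1:] - p) < degree p"
proof -
  let ?q = "p \<circ>\<^sub>p [:1, 1:] - p"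
  have "degree (p \<circ>\<^sub>p [:1, 1:]) = degree p"
    by (simp add: degree_pcompose)
  moreover have "coeff (p \<circ>\<^sub>p [:1, 1:]) (degree p) = lead_coeff p"
    using lead_coeff_comp[of "[:1, 1:]" p] by (simp add: degree_pcompose)
  ultimately have le: "degree ?q \<le> degree p" and top: "coeff ?q (degree p) = 0"
    using degree_diff_le[of "p \<circ>\<^sub>p [:1, 1:]" "degree p" p] by simp_all
  show ?thesis
  proof (cases "?q = 0")
    case False
    then have "coeff ?q (degree ?q) \<noteq> 0"
      by (rule leading_coeff_neq_0)
    with le top show ?thesis
      by (metis le_neq_implies_less)
  qed (use assms in simp)
qed

lemma Ints_of_differences_Ints:
  fixes f :: "int \<Rightarrow> 'a::ring_1"
  assumes "\<And>y. f (y + 1) - f y \<in> \<int>" and "f N \<in> \<int>"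
  shows "f x \<in> \<int>"
proof (induction x rule: int_induct[where k = N])
  case base
  show ?case by (rule assms(2))
next
  case (step1 i)
  then show ?case
    using Ints_add[OF assms(1)[of i] step1.IH] by simp
next
  case (step2 i)
  then show ?case
    using Ints_diff[OF step2.IH assms(1)[of "i - 1"]] by simp
qed

lemma poly_of_int_in_Ints:
  fixes p :: "'a::field_char_0 poly"
  assumes "\<And>n. n \<ge> N \<Longrightarrow> poly p (of_nat n) \<in> \<int>"
  shows "poly p (of_int x) \<in> \<int>"
  using assms
proof (induction "degree p" arbitrary: p x rule: less_induct)
  case less
  show ?case
  proof (cases "degree p = 0")
    case True
    then obtain a where "p = [:a:]"
      by (metis degree_eq_zeroE)
    then show ?thesis
      using less.prems[of N] by simp
  next
    case False
    define q where "q = p \<circ>\<^sub>p [:1, 1:] - p"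
    have q_eval: "poly q y = poly p (y + 1) - poly p y" for y
      by (simp add: q_def poly_pcompose algebra_simps)
    have q_Ints: "poly q (of_int y) \<in> \<int>" for y
    proof (rule less.hyps)
      show "degree q < degree p"
        unfolding q_def using False by (intro degree_forward_difference_less) simp
      show "poly q (of_nat n) \<in> \<int>" if "n \<ge> N" for n
        using less.prems[of n] less.prems[of "Suc n"] that by (simp add: q_eval Ints_diff add.commute)
    qed
    have "poly p (of_int (y + 1)) - poly p (of_int y) \<in> \<int>" for y
      using q_Ints[of y] by (simp add: q_eval)
    moreover have "poly p (of_int (int N)) \<in> \<int>"
      using less.prems[of N] by simp
    ultimately show ?thesis
      by (rule Ints_of_differences_Ints[where f = "\<lambda>y. poly p (of_int y)"])
  qed
qed

text \<open>Matrices of size n are handled as entry functions, which keeps the sum manipulations below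
  free of the carrier conditions of the matrix library.\<close>

fun fun_mat_pow :: "nat \<Rightarrow> (nat \<Rightarrow> nat \<Rightarrow> 'a::comm_semiring_1) \<Rightarrow> nat \<Rightarrow> nat \<Rightarrow> nat \<Rightarrow> 'a" where
  "fun_mat_pow n M 0 i j = (if i = j then 1 else 0)"
| "fun_mat_pow n M (Suc m) i j = (\<Sum>l<n. fun_mat_pow n M m i l * M l j)"

lemma fun_mat_pow_1:
  assumes "i < n"
  shows "fun_mat_pow n M 1 i j = M i j"
proof -
  have "fun_mat_pow n M 1 i j = (\<Sum>l<n. if i = l then M l j else 0)"
    by (simp only: One_nat_def fun_mat_pow.simps) (rule sum.cong, auto)
  then show ?thesis
    using assms by simp
qed

lemma fun_mat_pow_cong:
  assumes "\<And>i j. i < n \<Longrightarrow> j < n \<Longrightarrow> M i j = M' i j" and "j < n"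
  shows "fun_mat_pow n M m i j = fun_mat_pow n M' m i j"
  using assms(2) by (induction m arbitrary: j) (auto simp: assms(1) intro!: sum.cong)

lemma index_pow_mat_eq_fun_mat_pow:
  fixes A :: "'a::comm_semiring_1 mat"
  assumes A: "A \<in> carrier_mat n n" and ij: "i < n" "j < n"
  shows "(A ^\<^sub>m m) $$ (i,j) = fun_mat_pow n (\<lambda>i j. A $$ (i,j)) m i j"
  using ij(2)
proof (induction m arbitrary: j)
  case 0
  then show ?case using A ij by auto
next
  case (Suc m)
  have "(A ^\<^sub>m Suc m) $$ (i,j) = row (A ^\<^sub>m m) i \<bullet> col A j"
    using A ij Suc.prems by simp
  also have "\<dots> = (\<Sum>l<n. (A ^\<^sub>m m) $$ (i,l) * A $$ (l,j))"
    using A ij Suc.prems unfolding scalar_prod_def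
    by (auto simp: atLeast0LessThan intro!: sum.cong)
  also have "\<dots> = fun_mat_pow n (\<lambda>i j. A $$ (i,j)) (Suc m) i j"
    by (simp add: Suc.IH)
  finally show ?case .
qed

lemma fun_mat_pow_add:
  assumes "j < n"
  shows "fun_mat_pow n M (h + r) i j = (\<Sum>l<n. fun_mat_pow n M h i l * fun_mat_pow n M r l j)"
  using assms
proof (induction r arbitrary: j)
  case 0
  then show ?case by (simp add: if_distrib cong: if_cong)
next
  case (Suc r)
  have "fun_mat_pow n M (h + Suc r) i j = (\<Sum>q<n. fun_mat_pow n M (h + r) i q * M q j)"
    by simp
  also have "\<dots> = (\<Sum>q<n. \<Sum>l<n. fun_mat_pow n M h i l * fun_mat_pow n M r l q * M q j)"
    by (rule sum.cong) (simp_all add: Suc.IH sum_distrib_right)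
  also have "\<dots> = (\<Sum>l<n. \<Sum>q<n. fun_mat_pow n M h i l * (fun_mat_pow n M r l q * M q j))"
    by (subst sum.swap) (simp add: mult_ac)
  also have "\<dots> = (\<Sum>l<n. fun_mat_pow n M h i l * fun_mat_pow n M (Suc r) l j)"
    by (simp add: sum_distrib_left)
  finally show ?case .
qed

locale fun_mat_diagonalization =
  fixes n :: nat and M V W :: "nat \<Rightarrow> nat \<Rightarrow> 'a::comm_semiring_1" and d :: "nat \<Rightarrow> 'a"
  assumes eigen: "\<And>i k. i < n \<Longrightarrow> k < n \<Longrightarrow> (\<Sum>l<n. M i l * V l k) = d k * V i k"
    and right_inverse: "\<And>i j. i < n \<Longrightarrow> j < n \<Longrightarrow> (\<Sum>k<n. V i k * W k j) = (if i = j then 1 else 0)"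
    and left_inverse: "\<And>k l. k < n \<Longrightarrow> l < n \<Longrightarrow> (\<Sum>i<n. W k i * V i l) = (if k = l then 1 else 0)"
begin

lemma entry_eq:
  assumes "i < n" "j < n"
  shows "M i j = (\<Sum>k<n. V i k * d k * W k j)"
proof -
  have "(\<Sum>k<n. V i k * d k * W k j) = (\<Sum>k<n. (\<Sum>l<n. M i l * V l k) * W k j)"
    by (rule sum.cong) (use eigen[OF assms(1)] in \<open>auto simp: mult_ac\<close>)
  also have "\<dots> = (\<Sum>l<n. M i l * (\<Sum>k<n. V l k * W k j))"
    by (simp add: sum_distrib_left sum_distrib_right mult.assoc) (rule sum.swap)
  also have "\<dots> = (\<Sum>l<n. M i l * (if l = j then 1 else 0))"
    by (rule sum.cong) (use right_inverse[OF _ assms(2)] in auto)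
  also have "\<dots> = M i j"
    using assms by (simp add: if_distrib cong: if_cong)
  finally show ?thesis by simp
qed

lemma pow_eq:
  assumes "i < n" "j < n"
  shows "fun_mat_pow n M m i j = (\<Sum>k<n. V i k * d k ^ m * W k j)"
  using assms(2)
proof (induction m arbitrary: j)
  case 0
  then show ?case using right_inverse[OF assms(1)] by simp
next
  case (Suc m)
  have "fun_mat_pow n M (Suc m) i j =
      (\<Sum>l<n. (\<Sum>k<n. V i k * d k ^ m * W k l) * (\<Sum>p<n. V l p * d p * W p j))"
    unfolding fun_mat_pow.simps(2) by (rule sum.cong) (use Suc entry_eq in auto)
  also have "\<dots> = (\<Sum>k<n. \<Sum>p<n. \<Sum>l<n. (V i k * d k ^ m * d p * W p j) * (W k l * V l p))"
    unfolding sum_product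
    by (subst sum.swap) (rule sum.cong[OF refl], subst sum.swap, simp add: mult_ac)
  also have "\<dots> = (\<Sum>k<n. \<Sum>p<n. (V i k * d k ^ m * d p * W p j) * (if k = p then 1 else 0))"
    by (intro sum.cong refl) (simp add: sum_distrib_left[symmetric] left_inverse)
  also have "\<dots> = (\<Sum>k<n. V i k * d k ^ Suc m * W k j)"
    by (intro sum.cong refl) (simp add: if_distrib mult_ac cong: if_cong)
  finally show ?case .
qed

lemma trace_pow_eq: "(\<Sum>i<n. fun_mat_pow n M m i i) = (\<Sum>k<n. d k ^ m)"
proof -
  have "(\<Sum>i<n. fun_mat_pow n M m i i) = (\<Sum>k<n. \<Sum>i<n. d k ^ m * (W k i * V i k))"
    by (simp add: pow_eq mult_ac) (rule sum.swap)
  also have "\<dots> = (\<Sum>k<n. d k ^ m)"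
    by (rule sum.cong) (simp_all add: sum_distrib_left[symmetric] left_inverse)
  finally show ?thesis .
qed

end

section \<open>Eigenvectors of cot alpha J + B\<close>

definition B_entry :: "nat \<Rightarrow> nat \<Rightarrow> complex" where
  "B_entry i j = (if i < j then \<i> else if j < i then - \<i> else 0)"

definition theta :: "nat \<Rightarrow> real \<Rightarrow> nat \<Rightarrow> real" where
  "theta n \<alpha> k = (\<alpha> + real k * pi) / real n"

definition eigvec :: "nat \<Rightarrow> real \<Rightarrow> nat \<Rightarrow> nat \<Rightarrow> complex" where
  "eigvec n \<alpha> i k = cis (-2 * theta n \<alpha> k) ^ i"

definition eigvec_inv :: "nat \<Rightarrow> real \<Rightarrow> nat \<Rightarrow> nat \<Rightarrow> complex" where
  "eigvec_inv n \<alpha> k j = cis (2 * theta n \<alpha> k * real j) / of_nat n"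

lemma sin_theta_nonzero:
  assumes "n > 0" "sin \<alpha> \<noteq> 0"
  shows "sin (theta n \<alpha> k) \<noteq> 0"
proof
  assume "sin (theta n \<alpha> k) = 0"
  then obtain i :: int where "theta n \<alpha> k = of_int i * pi"
    by (auto simp: sin_zero_iff_int2)
  then have "\<alpha> = of_int (i * int n - int k) * pi"
    using assms(1) by (simp add: theta_def field_simps)
  then show False
    using assms(2) sin_zero_iff_int2 by blast
qed

lemma cot_mult_one_minus_cis:
  assumes "sin t \<noteq> 0"
  shows "complex_of_real (cot t) * (1 - cis (-2 * t)) = \<i> * (1 + cis (-2 * t))"
proof -
  have "1 - cis (-2 * t) = Complex (2 * sin t ^ 2) (2 * sin t * cos t)"
    by (simp add: complex_eq_iff cos_double_sin sin_double)
  moreover have "1 + cis (-2 * t) = Complex (2 * cos t ^ 2) (- 2 * sin t * cos t)"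
    by (simp add: complex_eq_iff cos_double_cos sin_double)
  ultimately show ?thesis
    using assms by (simp add: complex_eq_iff cot_def power2_eq_square)
qed

lemma sum_roots_unity_power:
  fixes d :: int
  assumes "n > 0" "\<bar>d\<bar> < int n"
  shows "(\<Sum>k<n. cis (2 * pi * real k * of_int d / real n)) = (if d = 0 then of_nat n else 0)"
proof (cases "d = 0")
  case False
  define z where "z = cis (2 * pi * of_int d / real n)"
  have powers: "cis (2 * pi * real k * of_int d / real n) = z ^ k" for k
    by (simp add: z_def DeMoivre mult_ac)
  have "z ^ n = 1"
    using assms(1) by (simp add: z_def DeMoivre)
  moreover have "z \<noteq> 1"
  proof
    assume "z = 1"
    then have "cos (2 * pi * of_int d / real n) = 1"
      by (simp add: z_def complex_eq_iff)
    then obtain q :: int where "2 * pi * of_int d / real n = of_int q * 2 * pi"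
      by (auto simp: cos_one_2pi_int)
    then have "d = q * int n"
      using assms(1) by (simp add: field_simps) (metis of_int_eq_iff of_int_mult of_int_of_nat_eq)
    with False assms(2) show False
      by (cases "q = 0") (auto simp: abs_mult dest: mult_right_mono[of 1 "\<bar>q\<bar>" "int n"])
  qed
  ultimately show ?thesis
    using False by (simp add: powers sum_gp_strict)
qed simp

lemma eigvec_right_inverse:
  assumes "n > 0" "i < n" "j < n"
  shows "(\<Sum>k<n. eigvec n \<alpha> i k * eigvec_inv n \<alpha> k j) = (if i = j then 1 else 0)"
proof -
  have "eigvec n \<alpha> i k * eigvec_inv n \<alpha> k j = cis (2 * \<alpha> * (real j - real i) / real n) / of_nat n *
      cis (2 * pi * real k * of_int (int j - int i) / real n)" for k
  proof -
    have "real i * (-2 * theta n \<alpha> k) + 2 * theta n \<alpha> k * real j =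
        2 * \<alpha> * (real j - real i) / real n + 2 * pi * real k * of_int (int j - int i) / real n"
      using assms(1) by (simp add: theta_def field_simps)
    then show ?thesis
      by (simp add: eigvec_def eigvec_inv_def DeMoivre cis_mult)
  qed
  then have "(\<Sum>k<n. eigvec n \<alpha> i k * eigvec_inv n \<alpha> k j) =
      cis (2 * \<alpha> * (real j - real i) / real n) / of_nat n *
      (\<Sum>k<n. cis (2 * pi * real k * of_int (int j - int i) / real n))"
    by (simp add: sum_distrib_left)
  also have "\<dots> = (if i = j then 1 else 0)"
    using assms by (subst sum_roots_unity_power) auto
  finally show ?thesis .
qed

lemma eigvec_left_inverse:
  assumes "n > 0" "k < n" "l < n"
  shows "(\<Sum>i<n. eigvec_inv n \<alpha> k i * eigvec n \<alpha> i l) = (if k = l then 1 else 0)"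
proof -
  have "eigvec_inv n \<alpha> k i * eigvec n \<alpha> i l =
      cis (2 * pi * real i * of_int (int k - int l) / real n) / of_nat n" for i
  proof -
    have "2 * theta n \<alpha> k * real i + real i * (-2 * theta n \<alpha> l) =
        2 * pi * real i * of_int (int k - int l) / real n"
      using assms(1) by (simp add: theta_def field_simps)
    then show ?thesis
      by (simp add: eigvec_def eigvec_inv_def DeMoivre cis_mult)
  qed
  then have "(\<Sum>i<n. eigvec_inv n \<alpha> k i * eigvec n \<alpha> i l) =
      (\<Sum>i<n. cis (2 * pi * real i * of_int (int k - int l) / real n)) / of_nat n"
    by (simp add: sum_divide_distrib)
  also have "\<dots> = (if k = l then 1 else 0)"
    using assms by (subst sum_roots_unity_power) auto
  finally show ?thesis .
qed

lemma sum_B_entry_mult_power: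
  fixes w :: complex
  assumes "i < n"
  shows "(\<Sum>l<n. B_entry i l * w ^ l) =
    \<i> * ((\<Sum>l<n. w ^ l) - (\<Sum>l<Suc i. w ^ l)) - \<i> * (\<Sum>l<i. w ^ l)"
proof -
  have below: "(\<Sum>l<n. if l < i then w ^ l else 0) = (\<Sum>l<i. w ^ l)"
    by (rule sum.mono_neutral_cong_right) (use assms in auto)
  have "(\<Sum>l<n. w ^ l) = (\<Sum>l<n. if i < l then w ^ l else 0) + (\<Sum>l<n. if l < Suc i then w ^ l else 0)"
    by (subst sum.distrib[symmetric]) (rule sum.cong, auto)
  also have "(\<Sum>l<n. if l < Suc i then w ^ l else 0) = (\<Sum>l<Suc i. w ^ l)"
    by (rule sum.mono_neutral_cong_right) (use assms in auto)
  finally have above: "(\<Sum>l<n. if i < l then w ^ l else 0) = (\<Sum>l<n. w ^ l) - (\<Sum>l<Suc i. w ^ l)"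
    by simp
  have "(\<Sum>l<n. B_entry i l * w ^ l) =
      (\<Sum>l<n. \<i> * (if i < l then w ^ l else 0) - \<i> * (if l < i then w ^ l else 0))"
    by (rule sum.cong) (auto simp: B_entry_def)
  also have "\<dots> = \<i> * (\<Sum>l<n. if i < l then w ^ l else 0) - \<i> * (\<Sum>l<n. if l < i then w ^ l else 0)"
    by (simp add: sum_subtractf sum_distrib_left)
  finally show ?thesis
    by (simp add: above below)
qed

text \<open>By the identity cot_mult_one_minus_cis, the hypotheses say c = cot alpha and x = cot theta
  when w = e^(-2 i theta) and w^n = e^(-2 i alpha).\<close>

lemma sum_plus_B_entry_mult_power:
  fixes w c x :: complex
  assumes c: "c * (1 - w ^ n) = \<i> * (1 + w ^ n)" and x: "x * (1 - w) = \<i> * (1 + w)" and "i < n"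
  shows "(\<Sum>l<n. (c + B_entry i l) * w ^ l) = x * w ^ i"
proof -
  have "w \<noteq> 1"
    using x by auto
  have geometric: "(1 - w) * (\<Sum>l<N. w ^ l) = 1 - w ^ N" for N
    by (simp add: one_diff_power_eq)
  have "(1 - w) * (\<Sum>l<n. (c + B_entry i l) * w ^ l) =
      c * ((1 - w) * (\<Sum>l<n. w ^ l)) + (1 - w) * (\<Sum>l<n. B_entry i l * w ^ l)"
    by (simp add: sum.distrib sum_distrib_left algebra_simps)
  also have "\<dots> = c * (1 - w ^ n) + \<i> * ((1 - w ^ n) - (1 - w ^ Suc i)) - \<i> * (1 - w ^ i)"
    unfolding sum_B_entry_mult_power[OF \<open>i < n\<close>] geometric[symmetric]
    by (simp add: algebra_simps)
  also have "\<dots> = (c * (1 - w ^ n) - \<i> * (1 + w ^ n)) + \<i> * (1 + w) * w ^ i"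
    by (simp add: algebra_simps)
  also have "\<dots> = (1 - w) * (x * w ^ i)"
    by (simp add: c x[symmetric] mult_ac)
  finally show ?thesis
    using \<open>w \<noteq> 1\<close> by simp
qed

lemma eigvec_eigen:
  assumes n: "n > 0" and "sin \<alpha> \<noteq> 0" and "i < n"
  shows "(\<Sum>l<n. (complex_of_real (cot \<alpha>) + B_entry i l) * eigvec n \<alpha> l k) =
    complex_of_real (cot (theta n \<alpha> k)) * eigvec n \<alpha> i k"
proof -
  define w where "w = cis (-2 * theta n \<alpha> k)"
  have "w ^ n = cis (real n * (-2 * theta n \<alpha> k))"
    by (simp add: w_def DeMoivre)
  also have "real n * (-2 * theta n \<alpha> k) = -2 * \<alpha> + 2 * pi * (- real k)"
    using n by (simp add: theta_def field_simps)
  also have "cis \<dots> = cis (-2 * \<alpha>)"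
    by (simp only: cis_mult[symmetric] cis_multiple_2pi[OF Ints_minus[OF Ints_of_nat]] mult_1_right)
  finally have "w ^ n = cis (-2 * \<alpha>)" .
  then have "complex_of_real (cot \<alpha>) * (1 - w ^ n) = \<i> * (1 + w ^ n)"
    using cot_mult_one_minus_cis[OF \<open>sin \<alpha> \<noteq> 0\<close>] by simp
  moreover have "complex_of_real (cot (theta n \<alpha> k)) * (1 - w) = \<i> * (1 + w)"
    unfolding w_def by (rule cot_mult_one_minus_cis[OF sin_theta_nonzero[OF assms(1,2)]])
  ultimately show ?thesis
    using sum_plus_B_entry_mult_power[OF _ _ \<open>i < n\<close>] by (simp add: eigvec_def w_def)
qed

lemma cot_plus_B_diagonalization:
  assumes "n > 0" "sin \<alpha> \<noteq> 0"
  shows "fun_mat_diagonalization n (\<lambda>i j. complex_of_real (cot \<alpha>) + B_entry i j)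
    (eigvec n \<alpha>) (eigvec_inv n \<alpha>) (\<lambda>k. complex_of_real (cot (theta n \<alpha> k)))"
  using assms by unfold_locales (simp_all add: eigvec_eigen eigvec_right_inverse eigvec_left_inverse)

lemma trace_cot_plus_B_pow:
  assumes "n > 0" "sin \<alpha> \<noteq> 0"
  shows "(\<Sum>i<n. fun_mat_pow n (\<lambda>i j. complex_of_real (cot \<alpha>) + B_entry i j) m i i) =
    complex_of_real (S m n \<alpha>)"
  by (simp add: fun_mat_diagonalization.trace_pow_eq[OF cot_plus_B_diagonalization[OF assms]]
      S_def theta_def)

lemma mat_trace_J_B_pow:
  "mat_trace ((c \<cdot>\<^sub>m J_mat n + B_mat n) ^\<^sub>m m) = (\<Sum>i<n. fun_mat_pow n (\<lambda>i j. c + B_entry i j) m i i)"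
proof -
  have carrier: "c \<cdot>\<^sub>m J_mat n + B_mat n \<in> carrier_mat n n"
    by (simp add: J_mat_def B_mat_def)
  show ?thesis
    unfolding mat_trace_def using carrier
    by (auto simp: index_pow_mat_eq_fun_mat_pow intro!: sum.cong fun_mat_pow_cong)
       (simp_all add: J_mat_def B_mat_def B_entry_def)
qed

section \<open>Adding a constant to all entries\<close>

definition row_sum :: "nat \<Rightarrow> (nat \<Rightarrow> nat \<Rightarrow> 'a::comm_semiring_1) \<Rightarrow> nat \<Rightarrow> nat \<Rightarrow> 'a" where
  "row_sum n M r i = (\<Sum>l<n. fun_mat_pow n M r i l)"

definition col_sum :: "nat \<Rightarrow> (nat \<Rightarrow> nat \<Rightarrow> 'a::comm_semiring_1) \<Rightarrow> nat \<Rightarrow> nat \<Rightarrow> 'a" where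
  "col_sum n M h j = (\<Sum>p<n. fun_mat_pow n M h p j)"

definition entry_sum :: "nat \<Rightarrow> (nat \<Rightarrow> nat \<Rightarrow> 'a::comm_semiring_1) \<Rightarrow> nat \<Rightarrow> 'a" where
  "entry_sum n M g = (\<Sum>p<n. \<Sum>j<n. fun_mat_pow n M g p j)"

definition mixed_sum :: "nat \<Rightarrow> (nat \<Rightarrow> nat \<Rightarrow> 'a::comm_semiring_1) \<Rightarrow> 'a \<Rightarrow> nat \<Rightarrow> nat \<Rightarrow> 'a" where
  "mixed_sum n B c h r = (\<Sum>i<n. col_sum n B h i * row_sum n (\<lambda>i j. c + B i j) r i)"

text \<open>Adding c to every entry is the rank-one update c u u^T (u the all-ones vector), so
  (B + c u u^T)^m = B^m + c \<Sum>h<m. (B + c u u^T)^(m-1-h) u u^T B^h.\<close>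

lemma fun_mat_pow_plus_const:
  assumes "j < n"
  shows "fun_mat_pow n (\<lambda>i j. c + B i j) m i j =
    fun_mat_pow n B m i j + c * (\<Sum>h<m. row_sum n (\<lambda>i j. c + B i j) (m - Suc h) i * col_sum n B h j)"
  using assms
proof (induction m arbitrary: j)
  case 0
  then show ?case by simp
next
  case (Suc m)
  let ?A = "\<lambda>i j. c + B i j"
  have col_sum_Suc: "(\<Sum>q<n. col_sum n B h q * B q j) = col_sum n B (Suc h) j" for h
    unfolding col_sum_def by (simp add: sum_distrib_right) (rule sum.swap)
  have "fun_mat_pow n ?A (Suc m) i j = c * row_sum n ?A m i + (\<Sum>q<n. fun_mat_pow n ?A m i q * B q j)"
    by (simp add: row_sum_def algebra_simps sum.distrib sum_distrib_left)
  also have "(\<Sum>q<n. fun_mat_pow n ?A m i q * B q j) =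
      (\<Sum>q<n. (fun_mat_pow n B m i q + c * (\<Sum>h<m. row_sum n ?A (m - Suc h) i * col_sum n B h q)) * B q j)"
    by (rule sum.cong) (simp_all add: Suc.IH)
  also have "\<dots> = fun_mat_pow n B (Suc m) i j +
      c * (\<Sum>h<m. row_sum n ?A (m - Suc h) i * (\<Sum>q<n. col_sum n B h q * B q j))"
    by (simp add: algebra_simps sum.distrib sum_distrib_left sum_distrib_right)
       (subst sum.swap, simp add: mult_ac)
  also have "\<dots> = fun_mat_pow n B (Suc m) i j +
      c * (\<Sum>h<m. row_sum n ?A (m - Suc h) i * col_sum n B (Suc h) j)"
    by (simp add: col_sum_Suc)
  finally have "fun_mat_pow n ?A (Suc m) i j = c * row_sum n ?A m i + (fun_mat_pow n B (Suc m) i j +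
      c * (\<Sum>h<m. row_sum n ?A (m - Suc h) i * col_sum n B (Suc h) j))" .
  moreover have "col_sum n B 0 j = 1"
    using Suc.prems by (simp add: col_sum_def)
  then have "(\<Sum>h<Suc m. row_sum n ?A (Suc m - Suc h) i * col_sum n B h j) =
      row_sum n ?A m i + (\<Sum>h<m. row_sum n ?A (m - Suc h) i * col_sum n B (Suc h) j)"
    by (subst sum.lessThan_Suc_shift) simp
  ultimately show ?case
    by (simp add: algebra_simps)
qed

lemma sum_col_sum: "(\<Sum>j<n. col_sum n M h j) = entry_sum n M h"
  unfolding entry_sum_def col_sum_def by (rule sum.swap)

lemma row_sum_plus_const:
  "row_sum n (\<lambda>i j. c + B i j) r i =
    row_sum n B r i + c * (\<Sum>g<r. row_sum n (\<lambda>i j. c + B i j) (r - Suc g) i * entry_sum n B g)"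
proof -
  have "row_sum n (\<lambda>i j. c + B i j) r i = (\<Sum>j<n. fun_mat_pow n B r i j +
      c * (\<Sum>h<r. row_sum n (\<lambda>i j. c + B i j) (r - Suc h) i * col_sum n B h j))"
    unfolding row_sum_def[of n "\<lambda>i j. c + B i j" r i] by (rule sum.cong) (simp_all add: fun_mat_pow_plus_const)
  also have "\<dots> = row_sum n B r i +
      c * (\<Sum>h<r. row_sum n (\<lambda>i j. c + B i j) (r - Suc h) i * (\<Sum>j<n. col_sum n B h j))"
    by (simp add: row_sum_def sum.distrib sum_distrib_left sum_distrib_right)
       (subst sum.swap, simp add: mult_ac)
  finally show ?thesis
    by (simp add: sum_col_sum)
qed

lemma sum_col_sum_mult_row_sum: "(\<Sum>i<n. col_sum n B h i * row_sum n B r i) = entry_sum n B (h + r)"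
proof -
  have "(\<Sum>i<n. col_sum n B h i * row_sum n B r i) =
      (\<Sum>p<n. \<Sum>j<n. \<Sum>i<n. fun_mat_pow n B h p i * fun_mat_pow n B r i j)"
    unfolding col_sum_def row_sum_def sum_product
    by (subst sum.swap) (rule sum.cong[OF refl], rule sum.swap)
  then show ?thesis
    by (simp add: entry_sum_def fun_mat_pow_add)
qed

lemma mixed_sum_rec:
  "mixed_sum n B c h r = entry_sum n B (h + r) + c * (\<Sum>g<r. mixed_sum n B c h (r - Suc g) * entry_sum n B g)"
proof -
  have "mixed_sum n B c h r = (\<Sum>i<n. col_sum n B h i * row_sum n B r i) +
      c * (\<Sum>g<r. (\<Sum>i<n. col_sum n B h i * row_sum n (\<lambda>i j. c + B i j) (r - Suc g) i) * entry_sum n B g)"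
    unfolding mixed_sum_def row_sum_plus_const[of n c B r]
    by (simp add: algebra_simps sum.distrib sum_distrib_left sum_distrib_right)
       (subst sum.swap, simp add: mult_ac)
  then show ?thesis
    by (simp add: sum_col_sum_mult_row_sum mixed_sum_def)
qed

lemma trace_fun_mat_pow_plus_const:
  "(\<Sum>i<n. fun_mat_pow n (\<lambda>i j. c + B i j) m i i) =
    (\<Sum>i<n. fun_mat_pow n B m i i) + c * (\<Sum>h<m. mixed_sum n B c h (m - Suc h))"
  unfolding mixed_sum_def
  by (simp add: fun_mat_pow_plus_const sum.distrib sum_distrib_left)
     (subst sum.swap, simp add: mult_ac)

text \<open>If b g = u^T B^g u and t g = tr B^g, then mixed_moment_poly b h r and trace_poly b t m take the
  values u^T B^h (B + c u u^T)^r u and tr (B + c u u^T)^m at c (mixed_sum_eq_poly and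
  trace_fun_mat_pow_plus_const_eq_poly).\<close>

function mixed_moment_poly :: "(nat \<Rightarrow> 'a::comm_semiring_1) \<Rightarrow> nat \<Rightarrow> nat \<Rightarrow> 'a poly" where
  "mixed_moment_poly b h r =
    [:b (h + r):] + pCons 0 (\<Sum>g<r. Polynomial.smult (b g) (mixed_moment_poly b h (r - Suc g)))"
  by auto
termination by (relation "measure (\<lambda>(b, h, r). r)") auto

declare mixed_moment_poly.simps [simp del]

definition trace_poly :: "(nat \<Rightarrow> 'a::comm_semiring_1) \<Rightarrow> (nat \<Rightarrow> 'a) \<Rightarrow> nat \<Rightarrow> 'a poly" where
  "trace_poly b t m = [:t m:] + pCons 0 (\<Sum>h<m. mixed_moment_poly b h (m - Suc h))"

lemma coeff_mixed_moment_poly_0: "coeff (mixed_moment_poly b h r) 0 = b (h + r)"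
  by (subst mixed_moment_poly.simps) simp

lemma coeff_mixed_moment_poly_Suc:
  "coeff (mixed_moment_poly b h r) (Suc j) = (\<Sum>g<r. b g * coeff (mixed_moment_poly b h (r - Suc g)) j)"
  by (subst mixed_moment_poly.simps) (simp add: coeff_sum)

lemma coeff_trace_poly_0: "coeff (trace_poly b t m) 0 = t m"
  by (simp add: trace_poly_def)

lemma coeff_trace_poly_Suc:
  "coeff (trace_poly b t m) (Suc j) = (\<Sum>h<m. coeff (mixed_moment_poly b h (m - Suc h)) j)"
  by (simp add: trace_poly_def coeff_sum)

lemma coeff_mixed_moment_poly_pos:
  fixes b :: "nat \<Rightarrow> 'a::linordered_semidom"
  assumes nonneg: "\<And>g. 0 \<le> b g" and pos: "\<And>g. even g \<Longrightarrow> 0 < b g"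
  shows "0 \<le> coeff (mixed_moment_poly b h r) j \<and>
    (j \<le> r \<and> even (h + r + j) \<longrightarrow> 0 < coeff (mixed_moment_poly b h r) j)"
proof (induction j arbitrary: r)
  case 0
  then show ?case
    using nonneg pos by (simp add: coeff_mixed_moment_poly_0)
next
  case (Suc j)
  have "0 \<le> coeff (mixed_moment_poly b h r) (Suc j)"
    unfolding coeff_mixed_moment_poly_Suc using Suc.IH nonneg by (auto intro!: sum_nonneg)
  moreover have "0 < coeff (mixed_moment_poly b h r) (Suc j)" if "Suc j \<le> r" "even (h + r + Suc j)"
  proof -
    have "0 < b 0 * coeff (mixed_moment_poly b h (r - Suc 0)) j"
      using Suc.IH[of "r - Suc 0"] pos[of 0] that by auto
    also have "\<dots> \<le> (\<Sum>g<r. b g * coeff (mixed_moment_poly b h (r - Suc g)) j)"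
      by (rule member_le_sum) (use that Suc.IH nonneg in auto)
    finally show ?thesis
      unfolding coeff_mixed_moment_poly_Suc .
  qed
  ultimately show ?case by blast
qed

lemma coeff_trace_poly_pos:
  fixes b t :: "nat \<Rightarrow> 'a::linordered_semidom"
  assumes nonneg: "\<And>g. 0 \<le> b g" and pos: "\<And>g. even g \<Longrightarrow> 0 < b g"
    and "even m \<Longrightarrow> 0 < t m" and "j \<le> m" "even (m + j)"
  shows "0 < coeff (trace_poly b t m) j"
proof (cases j)
  case 0
  then show ?thesis
    using assms by (simp add: coeff_trace_poly_0)
next
  case (Suc j')
  have "0 < coeff (mixed_moment_poly b 0 (m - Suc 0)) j'"
    using coeff_mixed_moment_poly_pos[OF nonneg pos, where h = 0 and r = "m - Suc 0" and j = j'] assms Suc by auto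
  also have "\<dots> \<le> (\<Sum>h<m. coeff (mixed_moment_poly b h (m - Suc h)) j')"
    by (rule member_le_sum) (use assms Suc coeff_mixed_moment_poly_pos[OF nonneg pos] in auto)
  finally show ?thesis
    unfolding Suc coeff_trace_poly_Suc .
qed

lemma coeff_mixed_moment_poly_Ints:
  assumes "\<And>g. b g \<in> \<int>"
  shows "coeff (mixed_moment_poly b h r) j \<in> \<int>"
proof (induction j arbitrary: r)
  case 0
  then show ?case
    using assms by (simp add: coeff_mixed_moment_poly_0)
next
  case (Suc j)
  then show ?case
    using assms unfolding coeff_mixed_moment_poly_Suc by (auto intro!: Ints_sum Ints_mult)
qed

lemma coeff_trace_poly_Ints:
  assumes "\<And>g. b g \<in> \<int>" "t m \<in> \<int>"
  shows "coeff (trace_poly b t m) j \<in> \<int>"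
  using assms coeff_mixed_moment_poly_Ints[OF assms(1)]
  by (cases j) (auto simp: coeff_trace_poly_0 coeff_trace_poly_Suc intro!: Ints_sum)

lemma mixed_sum_eq_poly:
  assumes "\<And>g. entry_sum n B g = complex_of_real (b g)"
  shows "mixed_sum n B (of_real c) h r = of_real (poly (mixed_moment_poly b h r) c)"
proof (induction r rule: less_induct)
  case (less r)
  show ?case
    by (subst mixed_sum_rec, subst mixed_moment_poly.simps)
       (simp add: assms less.IH poly_sum mult_ac)
qed

lemma trace_fun_mat_pow_plus_const_eq_poly:
  assumes "\<And>g. entry_sum n B g = complex_of_real (b g)"
    and "(\<Sum>i<n. fun_mat_pow n B m i i) = complex_of_real (t m)"
  shows "(\<Sum>i<n. fun_mat_pow n (\<lambda>i j. of_real c + B i j) m i i) = of_real (poly (trace_poly b t m) c)"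
  by (simp add: trace_fun_mat_pow_plus_const assms mixed_sum_eq_poly trace_poly_def poly_sum)

section \<open>S(m,n,alpha) as a polynomial in cot alpha\<close>

lemma inverse_sin_square: "sin t \<noteq> 0 \<Longrightarrow> inverse (sin t ^ 2) = 1 + cot t ^ 2"
  using sin_cos_squared_add[of t] by (simp add: cot_def field_simps power_divide)

lemma DERIV_S:
  assumes "n > 0" "sin \<alpha> \<noteq> 0"
  shows "DERIV (S (Suc m) n) \<alpha> :> - (real (Suc m) / real n) * (S m n \<alpha> + S (Suc (Suc m)) n \<alpha>)"
proof -
  have "DERIV (\<lambda>x. cot ((x + real k * pi) / real n) ^ Suc m) \<alpha> :>
      - (real (Suc m) / real n) * (cot (theta n \<alpha> k) ^ m + cot (theta n \<alpha> k) ^ Suc (Suc m))" for k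
  proof -
    have sin_theta: "sin (theta n \<alpha> k) \<noteq> 0"
      by (rule sin_theta_nonzero[OF assms])
    have "DERIV (\<lambda>x. (x + real k * pi) / real n) \<alpha> :> 1 / real n"
      using assms(1) by (auto intro!: derivative_eq_intros)
    from DERIV_chain2[OF DERIV_cot[OF sin_theta[unfolded theta_def]] this]
    have "DERIV (\<lambda>x. cot ((x + real k * pi) / real n)) \<alpha> :> - ((1 + cot (theta n \<alpha> k) ^ 2) / real n)"
      using inverse_sin_square[OF sin_theta] by (simp add: theta_def)
    from DERIV_power[OF this, of "Suc m"] show ?thesis
      by (simp add: theta_def field_simps power2_eq_square)
  qed
  then have "DERIV (\<lambda>x. \<Sum>k<n. cot ((x + real k * pi) / real n) ^ Suc m) \<alpha> :>
      (\<Sum>k<n. - (real (Suc m) / real n) * (cot (theta n \<alpha> k) ^ m + cot (theta n \<alpha> k) ^ Suc (Suc m)))"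
    by (rule DERIV_sum)
  then show ?thesis
    by (simp only: sum_distrib_left[symmetric] sum.distrib S_def[abs_def] theta_def)
qed

text \<open>cot_coeff m j is the coefficient of cot^j alpha in S(m,n,alpha), as a polynomial in n. The
  recursion is read off from DERIV_S: S(m+2) = n/(m+1) (1 + x^2) d/dx S(m+1) - S(m) with x = cot alpha.
  For j = 0 the truncated j - 1 only occurs with the factor 0.\<close>

fun cot_coeff :: "nat \<Rightarrow> nat \<Rightarrow> rat poly" where
  "cot_coeff 0 j = (if j = 0 then [:0, 1:] else 0)"
| "cot_coeff (Suc 0) j = (if j = 1 then [:0, 1:] else 0)"
| "cot_coeff (Suc (Suc m)) j = Polynomial.smult (1 / of_nat (Suc m)) ([:0, 1:] *
      (Polynomial.smult (of_nat (Suc j)) (cot_coeff (Suc m) (Suc j)) +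
       Polynomial.smult (of_nat (j - 1)) (cot_coeff (Suc m) (j - 1)))) - cot_coeff m j"

lemma cot_coeff_eq_0: "m < j \<or> odd (m + j) \<Longrightarrow> cot_coeff m j = 0"
proof (induction m j rule: cot_coeff.induct)
  case (3 m j)
  have "cot_coeff (Suc m) (Suc j) = 0"
    using 3 by (intro "3.IH"(1)) auto
  moreover have "Polynomial.smult (of_nat (j - 1)) (cot_coeff (Suc m) (j - 1)) = 0"
  proof (cases "j = 0")
    case False
    then have "cot_coeff (Suc m) (j - 1) = 0"
      using 3 by (intro "3.IH"(2)) auto
    then show ?thesis by simp
  qed simp
  moreover have "cot_coeff m j = 0"
    using 3 by (intro "3.IH"(3)) auto
  ultimately show ?case
    by (simp only: cot_coeff.simps) simp
qed (auto dest: odd_pos)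

definition cot_poly :: "nat \<Rightarrow> nat \<Rightarrow> real poly" where
  "cot_poly n m = (\<Sum>j\<le>m. monom (of_rat (poly (cot_coeff m j) (of_nat n))) j)"

lemma coeff_cot_poly: "coeff (cot_poly n m) j = of_rat (poly (cot_coeff m j) (of_nat n))"
  by (auto simp: cot_poly_def coeff_sum cot_coeff_eq_0)

lemma cot_poly_rec:
  "cot_poly n (Suc (Suc m)) = Polynomial.smult (real n / real (Suc m))
    (pderiv (cot_poly n (Suc m)) + pCons 0 (pCons 0 (pderiv (cot_poly n (Suc m))))) - cot_poly n m"
    (is "_ = ?rhs")
proof (rule poly_eqI)
  fix j
  consider "j = 0" | "j = 1" | k where "j = Suc (Suc k)"
    by (metis One_nat_def not0_implies_Suc)
  then show "coeff (cot_poly n (Suc (Suc m))) j = coeff ?rhs j"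
    by cases (simp_all add: coeff_cot_poly coeff_pderiv of_rat_add of_rat_diff of_rat_mult
        of_rat_divide field_simps)
qed

lemma DERIV_poly_cot:
  assumes "sin \<alpha> \<noteq> 0"
  shows "DERIV (\<lambda>x. poly p (cot x)) \<alpha> :> - (1 + cot \<alpha> ^ 2) * poly (pderiv p) (cot \<alpha>)"
  using DERIV_chain2[OF poly_DERIV DERIV_cot[OF assms]] inverse_sin_square[OF assms]
  by (simp add: mult_ac)

lemma S_1:
  assumes n: "n > 0" and "sin \<alpha> \<noteq> 0"
  shows "S 1 n \<alpha> = real n * cot \<alpha>"
proof -
  have "complex_of_real (S 1 n \<alpha>) =
      (\<Sum>i<n. fun_mat_pow n (\<lambda>i j. complex_of_real (cot \<alpha>) + B_entry i j) 1 i i)"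
    by (rule trace_cot_plus_B_pow[OF assms, symmetric])
  also have "\<dots> = (\<Sum>i<n. complex_of_real (cot \<alpha>) + B_entry i i)"
    by (intro sum.cong refl fun_mat_pow_1) simp
  also have "\<dots> = complex_of_real (real n * cot \<alpha>)"
    by (simp add: B_entry_def)
  finally show ?thesis
    by (simp only: of_real_eq_iff)
qed

lemma S_eq_poly_cot:
  assumes n: "n > 0" and "sin \<alpha> \<noteq> 0"
  shows "S m n \<alpha> = poly (cot_poly n m) (cot \<alpha>)"
  using assms(2)
proof (induction m arbitrary: \<alpha> rule: induct_nat_012)
  case 0
  then show ?case
    by (simp add: S_def cot_poly_def poly_monom)
next
  case 1
  then show ?case
    using S_1[OF n 1] by (simp add: cot_poly_def poly_monom One_nat_def)
next
  case (ge2 m)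
  let ?Q = "cot_poly n (Suc m)"
  have "open {x::real. sin x \<noteq> 0}"
    by (auto intro!: open_Collect_neq continuous_intros)
  then have "eventually (\<lambda>x. x \<in> {x. sin x \<noteq> 0}) (nhds \<alpha>)"
    using ge2.prems by (intro eventually_nhds_in_open) auto
  then have locally_eq: "eventually (\<lambda>x. S (Suc m) n x = poly ?Q (cot x)) (nhds \<alpha>)"
    by (rule eventually_mono) (simp add: ge2.IH(2))
  have "DERIV (S (Suc m) n) \<alpha> :> - (1 + cot \<alpha> ^ 2) * poly (pderiv ?Q) (cot \<alpha>)"
    unfolding DERIV_cong_ev[OF refl locally_eq refl] by (rule DERIV_poly_cot[OF ge2.prems])
  with DERIV_S[OF n ge2.prems]
  have "- (real (Suc m) / real n) * (S m n \<alpha> + S (Suc (Suc m)) n \<alpha>) =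
      - (1 + cot \<alpha> ^ 2) * poly (pderiv ?Q) (cot \<alpha>)"
    by (rule DERIV_unique)
  then have "S (Suc (Suc m)) n \<alpha> =
      real n / real (Suc m) * ((1 + cot \<alpha> ^ 2) * poly (pderiv ?Q) (cot \<alpha>)) - S m n \<alpha>"
    using n by (simp add: field_simps)
  then show ?case
    by (simp add: cot_poly_rec ge2.IH(1)[OF ge2.prems] algebra_simps power2_eq_square)
qed

lemma sum_atMost_same_parity:
  fixes f :: "nat \<Rightarrow> 'a::comm_monoid_add"
  assumes "\<And>j. j \<le> m \<Longrightarrow> odd (m + j) \<Longrightarrow> f j = 0"
  shows "(\<Sum>j\<le>m. f j) = (\<Sum>k\<le>m div 2. f (m - 2 * k))"
proof -
  have "inj_on (\<lambda>k. m - 2 * k) {..m div 2}"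
    by (rule inj_onI) auto
  then have "(\<Sum>k\<le>m div 2. f (m - 2 * k)) = (\<Sum>j\<in>(\<lambda>k. m - 2 * k) ` {..m div 2}. f j)"
    by (simp add: sum.reindex)
  also have "\<dots> = (\<Sum>j\<le>m. f j)"
  proof (rule sum.mono_neutral_left)
    show "\<forall>j\<in>{..m} - (\<lambda>k. m - 2 * k) ` {..m div 2}. f j = 0"
    proof
      fix j
      assume j: "j \<in> {..m} - (\<lambda>k. m - 2 * k) ` {..m div 2}"
      have "odd (m + j)"
      proof
        assume "even (m + j)"
        then have "j = m - 2 * ((m - j) div 2)" "(m - j) div 2 \<le> m div 2"
          using j by (auto simp: div_le_mono)
        with j show False
          by blast
      qed
      with j show "f j = 0"
        by (intro assms) auto
    qed
  qed auto
  finally show ?thesis ..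
qed

lemma S_eq_cot_coeff_sum:
  assumes "n > 0" "sin \<alpha> \<noteq> 0"
  shows "S m n \<alpha> = (\<Sum>k\<le>m div 2. of_rat (poly (cot_coeff m (m - 2 * k)) (of_nat n)) * cot \<alpha> ^ (m - 2 * k))"
proof -
  have "S m n \<alpha> = (\<Sum>j\<le>m. of_rat (poly (cot_coeff m j) (of_nat n)) * cot \<alpha> ^ j)"
    by (simp add: S_eq_poly_cot[OF assms] cot_poly_def poly_sum poly_monom)
  also have "\<dots> = (\<Sum>k\<le>m div 2. of_rat (poly (cot_coeff m (m - 2 * k)) (of_nat n)) * cot \<alpha> ^ (m - 2 * k))"
    by (rule sum_atMost_same_parity) (simp add: cot_coeff_eq_0)
  finally show ?thesis .
qed

section \<open>Traces and moments of powers of B\<close>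

lemma cot_pi_half: "cot (pi / 2) = 0"
  by (simp add: cot_def)

lemma B_entry_diagonalization:
  assumes "n > 0"
  shows "fun_mat_diagonalization n B_entry (eigvec n (pi / 2)) (eigvec_inv n (pi / 2))
    (\<lambda>k. complex_of_real (cot (theta n (pi / 2) k)))"
  using cot_plus_B_diagonalization[OF assms, of "pi / 2"] by (simp add: cot_pi_half)

lemma trace_B_pow:
  assumes "n > 0"
  shows "(\<Sum>i<n. fun_mat_pow n B_entry m i i) = complex_of_real (S m n (pi / 2))"
  using trace_cot_plus_B_pow[OF assms, of "pi / 2" m] by (simp add: cot_pi_half)

lemma S_pi_half_eq_cot_coeff:
  assumes "n > 0"
  shows "S m n (pi / 2) = of_rat (poly (cot_coeff m 0) (of_nat n))"
  using S_eq_poly_cot[OF assms, of "pi / 2" m] by (simp add: cot_pi_half poly_0_coeff_0 coeff_cot_poly)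

lemma S_pi_half_odd: "n > 0 \<Longrightarrow> odd m \<Longrightarrow> S m n (pi / 2) = 0"
  by (simp add: S_pi_half_eq_cot_coeff cot_coeff_eq_0)

lemma S_pi_half_even_pos:
  assumes "n \<ge> 2" "even m"
  shows "0 < S m n (pi / 2)"
proof -
  have "pi / 2 / real n < pi / 2 / 1"
    by (rule divide_strict_left_mono) (use assms(1) in auto)
  then have "0 < cot (pi / 2 / real n)"
    using assms(1) by (intro cot_gt_zero) auto
  then have "0 < cot ((pi / 2 + real 0 * pi) / real n) ^ m"
    by simp
  also have "\<dots> \<le> (\<Sum>k<n. cot ((pi / 2 + real k * pi) / real n) ^ m)"
    by (rule member_le_sum) (use assms in \<open>auto simp: zero_le_even_power\<close>)
  finally show ?thesis
    by (simp add: S_def)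
qed

lemma cis_two_theta_pi_half_power:
  assumes "n > 0"
  shows "cis (2 * theta n (pi / 2) k) ^ n = -1"
proof -
  have "cis (2 * theta n (pi / 2) k) ^ n = cis (real n * (2 * theta n (pi / 2) k))"
    by (simp add: DeMoivre)
  also have "real n * (2 * theta n (pi / 2) k) = pi + 2 * pi * of_int (int k)"
    using assms by (simp add: theta_def field_simps)
  also have "cis \<dots> = -1"
    by (simp only: cis_mult[symmetric] cis_multiple_2pi[OF Ints_of_int] mult_1_right)
       (simp add: complex_eq_iff)
  finally show ?thesis .
qed

lemma one_minus_cis_mult_one_minus_cis:
  "(1 - cis (-2 * t)) * (1 - cis (2 * t)) = complex_of_real (4 * sin t ^ 2)"
proof -
  have "(1 - cis (-2 * t)) * (1 - cis (2 * t)) = 2 - (cis (-2 * t) + cis (2 * t))"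
    by (simp add: algebra_simps cis_mult)
  also have "\<dots> = of_real (4 * sin t ^ 2)"
    by (simp add: complex_eq_iff cos_double_sin)
  finally show ?thesis .
qed

lemma sum_eigvec_mult_sum_eigvec_inv:
  assumes n: "n > 0" and "k < n"
  shows "(\<Sum>p<n. eigvec n (pi / 2) p k) * (\<Sum>j<n. eigvec_inv n (pi / 2) k j) =
    complex_of_real ((1 + cot (theta n (pi / 2) k) ^ 2) / real n)"
proof -
  define t where "t = theta n (pi / 2) k"
  define w where "w = cis (-2 * t)"
  define z where "z = cis (2 * t)"
  have "sin t \<noteq> 0"
    unfolding t_def by (rule sin_theta_nonzero[OF n]) simp
  have zn: "z ^ n = -1"
    unfolding z_def t_def by (rule cis_two_theta_pi_half_power[OF n])
  then have wn: "w ^ n = -1"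
    by (simp add: w_def z_def power_inverse flip: cis_inverse)
  have prod: "(1 - w) * (1 - z) = of_real (4 * sin t ^ 2)"
    unfolding w_def z_def by (rule one_minus_cis_mult_one_minus_cis)
  with \<open>sin t \<noteq> 0\<close> have "w \<noteq> 1" "z \<noteq> 1"
    by auto
  have "(\<Sum>p<n. eigvec n (pi / 2) p k) = (\<Sum>p<n. w ^ p)"
    by (simp add: eigvec_def w_def t_def)
  also have "\<dots> = 2 / (1 - w)"
    using \<open>w \<noteq> 1\<close> by (simp add: sum_gp_strict wn)
  finally have sum_w: "(\<Sum>p<n. eigvec n (pi / 2) p k) = 2 / (1 - w)" .
  have "(\<Sum>j<n. eigvec_inv n (pi / 2) k j) = (\<Sum>j<n. z ^ j) / of_nat n"
    by (simp add: eigvec_inv_def z_def t_def DeMoivre sum_divide_distrib mult_ac)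
  also have "\<dots> = 2 / (1 - z) / of_nat n"
    using \<open>z \<noteq> 1\<close> by (simp add: sum_gp_strict zn)
  finally have sum_z: "(\<Sum>j<n. eigvec_inv n (pi / 2) k j) = 2 / (1 - z) / of_nat n" .
  have "(\<Sum>p<n. eigvec n (pi / 2) p k) * (\<Sum>j<n. eigvec_inv n (pi / 2) k j) =
      4 / ((1 - w) * (1 - z)) / of_nat n"
    by (simp add: sum_w sum_z)
  also have "\<dots> = of_real (1 / (sin t ^ 2 * real n))"
    by (simp add: prod)
  also have "1 / (sin t ^ 2 * real n) = inverse (sin t ^ 2) / real n"
    by (simp only: divide_divide_eq_left[symmetric] inverse_eq_divide)
  also have "\<dots> = (1 + cot t ^ 2) / real n"
    by (simp only: inverse_sin_square[OF \<open>sin t \<noteq> 0\<close>])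
  finally show ?thesis
    by (simp add: t_def)
qed

lemma entry_sum_B_pow:
  assumes n: "n > 0"
  shows "entry_sum n B_entry g = complex_of_real ((S g n (pi / 2) + S (g + 2) n (pi / 2)) / real n)"
proof -
  let ?V = "eigvec n (pi / 2)" and ?W = "eigvec_inv n (pi / 2)" and ?x = "\<lambda>k. cot (theta n (pi / 2) k)"
  have "entry_sum n B_entry g = (\<Sum>p<n. \<Sum>j<n. \<Sum>k<n. ?V p k * of_real (?x k) ^ g * ?W k j)"
    unfolding entry_sum_def
    by (intro sum.cong refl) (simp add: fun_mat_diagonalization.pow_eq[OF B_entry_diagonalization[OF n]])
  also have "\<dots> = (\<Sum>k<n. \<Sum>p<n. \<Sum>j<n. ?V p k * of_real (?x k) ^ g * ?W k j)"
    by (subst sum.swap) (rule sum.cong[OF refl], rule sum.swap)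
  also have "\<dots> = (\<Sum>k<n. of_real (?x k) ^ g * ((\<Sum>p<n. ?V p k) * (\<Sum>j<n. ?W k j)))"
    by (simp add: sum_product sum_distrib_left mult_ac)
  also have "\<dots> = (\<Sum>k<n. of_real (?x k ^ g * ((1 + ?x k ^ 2) / real n)))"
    by (intro sum.cong refl) (simp add: sum_eigvec_mult_sum_eigvec_inv[OF n])
  also have "\<dots> = of_real ((S g n (pi / 2) + S (g + 2) n (pi / 2)) / real n)"
    by (simp add: S_def theta_def sum_divide_distrib[symmetric] sum.distrib[symmetric]
        algebra_simps power_add power2_eq_square)
  finally show ?thesis .
qed

lemma fun_mat_pow_B_entry_Ints:
  "Re (fun_mat_pow n B_entry m i j) \<in> \<int> \<and> Im (fun_mat_pow n B_entry m i j) \<in> \<int>"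
  by (induction m arbitrary: j) (auto simp: B_entry_def intro!: Ints_sum)

section \<open>Integrality and positivity of the coefficients\<close>

lemma exists_cot_eq: "\<exists>\<alpha>. sin \<alpha> \<noteq> 0 \<and> cot \<alpha> = (c::real)"
proof -
  define \<alpha> where "\<alpha> = pi / 2 - arctan c"
  have "sin \<alpha> = cos (arctan c)"
    by (simp add: \<alpha>_def cos_sin_eq)
  moreover have "cos \<alpha> = sin (arctan c)"
    by (simp add: \<alpha>_def sin_cos_eq)
  ultimately have "sin \<alpha> \<noteq> 0 \<and> cot \<alpha> = c"
    using tan_arctan[of c] by (simp add: cot_def tan_def)
  then show ?thesis ..
qed

lemma trace_poly_eq_cot_poly:
  assumes "n > 0"
  shows "trace_poly (\<lambda>g. (S g n (pi / 2) + S (g + 2) n (pi / 2)) / real n) (\<lambda>g. S g n (pi / 2)) m =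
    cot_poly n m"
    (is "trace_poly ?b ?t m = _")
proof -
  have "poly (trace_poly ?b ?t m) c = poly (cot_poly n m) c" for c
  proof -
    obtain \<alpha> where \<alpha>: "sin \<alpha> \<noteq> 0" "cot \<alpha> = c"
      using exists_cot_eq by blast
    have "complex_of_real (poly (trace_poly ?b ?t m) c) =
        (\<Sum>i<n. fun_mat_pow n (\<lambda>i j. of_real c + B_entry i j) m i i)"
      by (rule trace_fun_mat_pow_plus_const_eq_poly[symmetric])
         (simp_all add: entry_sum_B_pow trace_B_pow assms)
    also have "\<dots> = of_real (poly (cot_poly n m) c)"
      using trace_cot_plus_B_pow[OF assms \<alpha>(1)] S_eq_poly_cot[OF assms \<alpha>(1)] \<alpha>(2) by simp
    finally show ?thesis
      by (simp only: of_real_eq_iff)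
  qed
  then show ?thesis
    by (simp flip: poly_eq_poly_eq_iff add: fun_eq_iff)
qed

lemma cot_coeff_Ints:
  assumes "n > 0"
  shows "poly (cot_coeff m j) (of_nat n) \<in> \<int>"
proof -
  have moments: "(S g n (pi / 2) + S (g + 2) n (pi / 2)) / real n \<in> \<int>" for g
    using fun_mat_pow_B_entry_Ints[of n g] entry_sum_B_pow[OF assms, of g]
    by (metis Ints_sum Re_complex_of_real Re_sum entry_sum_def)
  have traces: "S g n (pi / 2) \<in> \<int>" for g
    using fun_mat_pow_B_entry_Ints[of n g] trace_B_pow[OF assms, of g]
    by (metis Ints_sum Re_complex_of_real Re_sum)
  have "coeff (trace_poly (\<lambda>g. (S g n (pi / 2) + S (g + 2) n (pi / 2)) / real n) (\<lambda>g. S g n (pi / 2)) m) j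
      \<in> \<int>"
    by (rule coeff_trace_poly_Ints) (use moments traces in auto)
  then show ?thesis
    unfolding trace_poly_eq_cot_poly[OF assms] coeff_cot_poly Ints_of_rat_iff .
qed

lemma cot_coeff_pos:
  assumes "n \<ge> 2" "j \<le> m" "even (m + j)"
  shows "0 < poly (cot_coeff m j) (of_nat n)"
proof -
  let ?b = "\<lambda>g. (S g n (pi / 2) + S (g + 2) n (pi / 2)) / real n" and ?t = "\<lambda>g. S g n (pi / 2)"
  have "n > 0"
    using assms(1) by simp
  have pos: "0 < ?b g" if "even g" for g
    using S_pi_half_even_pos[OF assms(1) that] S_pi_half_even_pos[OF assms(1), of "g + 2"] that \<open>n > 0\<close>
    by simp
  have nonneg: "0 \<le> ?b g" for g
  proof (cases "even g")
    case True
    then show ?thesis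
      using pos[OF True] by simp
  next
    case False
    then show ?thesis
      using S_pi_half_odd[OF \<open>n > 0\<close>, of g] S_pi_half_odd[OF \<open>n > 0\<close>, of "g + 2"] by simp
  qed
  have "0 < coeff (trace_poly ?b ?t m) j"
    by (rule coeff_trace_poly_pos[OF nonneg pos S_pi_half_even_pos[OF assms(1)] assms(2,3)])
  then show ?thesis
    unfolding trace_poly_eq_cot_poly[OF \<open>n > 0\<close>] coeff_cot_poly by simp
qed

lemma cot_power_sum_polynomials:
  "\<exists>p :: nat \<Rightarrow> rat poly.
      (\<forall>k \<le> m div 2. \<forall>x::int. poly (p k) (of_int x) \<in> \<int>)
    \<and> (\<forall>n::nat. \<forall>\<alpha>::real. n \<ge> 2 \<longrightarrow> (\<forall>j::int. \<alpha> \<noteq> of_int j * pi) \<longrightarrow>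
         S m n \<alpha> = (\<Sum>k \<le> m div 2. of_rat (poly (p k) (of_nat n)) * cot \<alpha> ^ (m - 2 * k)))
    \<and> (\<forall>n::nat. n \<ge> 2 \<longrightarrow> (\<forall>k \<le> m div 2.
         poly (p k) (of_nat n) \<in> \<int> \<and> poly (p k) (of_nat n) > 0))"
proof (intro exI[of _ "\<lambda>k. cot_coeff m (m - 2 * k)"] conjI allI impI)
  fix k :: nat and x :: int
  show "poly (cot_coeff m (m - 2 * k)) (of_int x) \<in> \<int>"
    by (rule poly_of_int_in_Ints[where N = 1]) (simp add: cot_coeff_Ints)
next
  fix n :: nat and \<alpha> :: real
  assume "2 \<le> n" "\<forall>j::int. \<alpha> \<noteq> of_int j * pi"
  then show "S m n \<alpha> =
      (\<Sum>k \<le> m div 2. of_rat (poly (cot_coeff m (m - 2 * k)) (of_nat n)) * cot \<alpha> ^ (m - 2 * k))"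
    by (simp add: S_eq_cot_coeff_sum sin_zero_iff_int2)
next
  fix n k :: nat
  assume "2 \<le> n"
  then show "poly (cot_coeff m (m - 2 * k)) (of_nat n) \<in> \<int>"
    by (simp add: cot_coeff_Ints)
next
  fix n k :: nat
  assume "2 \<le> n" "k \<le> m div 2"
  then show "poly (cot_coeff m (m - 2 * k)) (of_nat n) > 0"
    by (intro cot_coeff_pos) auto
qed

theorem theorem3p1:
  shows "(\<forall>m n (\<alpha>::real). m \<ge> 1 \<longrightarrow> n \<ge> 2 \<longrightarrow> (\<forall>j::int. \<alpha> \<noteq> of_int j * pi) \<longrightarrow>
           complex_of_real (S m n \<alpha>) =
           mat_trace ((complex_of_real (cot \<alpha>) \<cdot>\<^sub>m J_mat n + B_mat n) ^\<^sub>m m))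
       \<and> (\<forall>m::nat. m \<ge> 1 \<longrightarrow>
           (\<exists>p :: nat \<Rightarrow> rat poly.
              (\<forall>k \<le> m div 2. \<forall>x::int. poly (p k) (of_int x) \<in> \<int>)
            \<and> (\<forall>n::nat. \<forall>\<alpha>::real. n \<ge> 2 \<longrightarrow> (\<forall>j::int. \<alpha> \<noteq> of_int j * pi) \<longrightarrow>
                 S m n \<alpha> = (\<Sum>k \<le> m div 2. of_rat (poly (p k) (of_nat n)) * cot \<alpha> ^ (m - 2 * k)))
            \<and> (\<forall>n::nat. n \<ge> 2 \<longrightarrow> (\<forall>k \<le> m div 2.
                 poly (p k) (of_nat n) \<in> \<int> \<and> poly (p k) (of_nat n) > 0))))"
proof (intro conjI allI impI)
  fix m n :: nat and \<alpha> :: real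
  assume "2 \<le> n" "\<forall>j::int. \<alpha> \<noteq> of_int j * pi"
  then show "complex_of_real (S m n \<alpha>) =
      mat_trace ((complex_of_real (cot \<alpha>) \<cdot>\<^sub>m J_mat n + B_mat n) ^\<^sub>m m)"
    by (simp add: mat_trace_J_B_pow trace_cot_plus_B_pow sin_zero_iff_int2)
qed (rule cot_power_sum_polynomials)

end
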